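(* Let $G$ be an $N$-player normal-form game in which each player has $T$ actions, and let $f$ be a deterministic, permutation-equivariant embedding function, with $f(G) = (\mathbf{A}_1,\dots,\mathbf{A}_N)$, $\mathbf{A}_p = ({\bm{a}}^1_p,\dots,{\bm{a}}^T_p)$. If actions $a^i_p$ and $a^j_q$ are strategically equivalent in $G$, then their embeddings coincide: ${\bm{a}}^i_p = {\bm{a}}^j_q$.
   Context: A normal-form game $G$ with $N$ players, each player $p$ having actions $\mathcal{A}_p = \{a^1_p,\dots,a^T_p\}$, is given by payoff functions $G_p:\mathcal{A}=\mathcal{A}_1\times\dots\times\mathcal{A}_N\to\mathbb{R}$. A strong isomorphism $\phi=((\tau_p)_{p\in[N]},\omega)$ consists of a permutation $\omega$ of the players and, for each player $p$, a bijection $\tau_p$ from the actions of $p$ to the actions of $\omega(p)$; it maps $G$ to the game $G'=\phi(G)$ defined by $G'_{\omega(p)}(b) = G_p(a)$ for all players $p$ and joint actions $a$, where $b$ is the joint action with $b_{\omega(r)}=\tau_r(a_r)$ for every player $r$. A strong automorphism of $G$ is a strong isomorphism with $\phi(G)=G$. An embedding function $f$ assigns to each game a tuple $(\mathbf{A}_1,\dots,\mathbf{A}_N)$ of action embeddings ${\bm{a}}^t_p\in\mathbb{R}^D$, one per action; $\phi$ acts on such a tuple by placing the embedding of action $a^i_p$ at the position of action $\tau_p(a^i_p)$ of player $\omega(p)$. $f$ is (permutation-)equivariant if $f(\phi(G))=\phi(f(G))$ for every game $G$ and every strong isomorphism $\phi$; deterministic means $f$ is a (single-valued) function of the game. Two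 actions $a^i_p$ and $a^j_q$ are strategically equivalent in $G$ if there is a strong automorphism $\phi$ of $G$ with $\omega(p)=q$ and $\tau_p(a^i_p)=a^j_q$. *)

theory Defs
  imports "HOL-Analysis.Analysis"
begin

text \<open>A game is a payoff function G p a (payoff of player p at joint action a),
  taken extensional (0 outside players / joint actions), so that equality of
  games is HOL equality.\<close>

type_synonym game = "nat \<Rightarrow> (nat \<Rightarrow> nat) \<Rightarrow> real"

definition joint_actions :: "nat \<Rightarrow> nat \<Rightarrow> (nat \<Rightarrow> nat) set" where
  "joint_actions N T = PiE {..<N} (\<lambda>_. {..<T})"

definition is_game :: "nat \<Rightarrow> nat \<Rightarrow> game \<Rightarrow> bool" where
  "is_game N T G \<longleftrightarrow>
     (\<forall>p a. (p \<notin> {..<N} \<or> a \<notin> joint_actions N T) \<longrightarrow> G p a = 0)"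

definition strong_iso :: "nat \<Rightarrow> nat \<Rightarrow> (nat \<Rightarrow> nat) \<Rightarrow> (nat \<Rightarrow> nat \<Rightarrow> nat) \<Rightarrow> bool" where
  "strong_iso N T \<omega> \<tau> \<longleftrightarrow>
     bij_betw \<omega> {..<N} {..<N} \<and> (\<forall>p<N. bij_betw (\<tau> p) {..<T} {..<T})"

text \<open>Image of a joint action a: the joint action b with b (\<omega> r) = \<tau> r (a r).\<close>

definition map_joint :: "nat \<Rightarrow> (nat \<Rightarrow> nat) \<Rightarrow> (nat \<Rightarrow> nat \<Rightarrow> nat) \<Rightarrow> (nat \<Rightarrow> nat) \<Rightarrow> (nat \<Rightarrow> nat)" where
  "map_joint N \<omega> \<tau> a =
     (\<lambda>s\<in>{..<N}. \<tau> (the_inv_into {..<N} \<omega> s) (a (the_inv_into {..<N} \<omega> s)))"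

text \<open>G' = \<phi>(G): G' (\<omega> p) b = G p a for all players p and joint actions a,
  where b = map_joint a.  (Among extensional games G' is uniquely determined.)\<close>

definition iso_image :: "nat \<Rightarrow> nat \<Rightarrow> (nat \<Rightarrow> nat) \<Rightarrow> (nat \<Rightarrow> nat \<Rightarrow> nat) \<Rightarrow> game \<Rightarrow> game \<Rightarrow> bool" where
  "iso_image N T \<omega> \<tau> G G' \<longleftrightarrow> is_game N T G' \<and>
     (\<forall>p<N. \<forall>a\<in>joint_actions N T. G' (\<omega> p) (map_joint N \<omega> \<tau> a) = G p a)"

definition strong_automorphism :: "nat \<Rightarrow> nat \<Rightarrow> (nat \<Rightarrow> nat) \<Rightarrow> (nat \<Rightarrow> nat \<Rightarrow> nat) \<Rightarrow> game \<Rightarrow> bool" where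
  "strong_automorphism N T \<omega> \<tau> G \<longleftrightarrow> strong_iso N T \<omega> \<tau> \<and> iso_image N T \<omega> \<tau> G G"

text \<open>An embedding function maps a game to the tuple of action embeddings:
  f G p t is the embedding (in R^D) of action t of player p.
  \<phi> acts on an embedding tuple E by placing E p i at position (\<omega> p, \<tau> p i).
  Determinism is implicit: f is a HOL function.\<close>

definition equivariant :: "nat \<Rightarrow> nat \<Rightarrow> (game \<Rightarrow> nat \<Rightarrow> nat \<Rightarrow> 'v) \<Rightarrow> bool" where
  "equivariant N T f \<longleftrightarrow>
     (\<forall>\<omega> \<tau> G G'. strong_iso N T \<omega> \<tau> \<and> is_game N T G \<and> iso_image N T \<omega> \<tau> G G' \<longrightarrow>
        (\<forall>p<N. \<forall>i<T. f G' (\<omega> p) (\<tau> p i) = f G p i))"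

definition strategically_equivalent :: "nat \<Rightarrow> nat \<Rightarrow> game \<Rightarrow> nat \<Rightarrow> nat \<Rightarrow> nat \<Rightarrow> nat \<Rightarrow> bool" where
  "strategically_equivalent N T G p i q j \<longleftrightarrow>
     (\<exists>\<omega> \<tau>. strong_automorphism N T \<omega> \<tau> G \<and> \<omega> p = q \<and> \<tau> p i = j)"

end

theory Submission
  imports Defs
begin

lemma equivariant_automorphism_invariant:
  assumes "equivariant N T f" and "is_game N T G"
    and "strong_automorphism N T \<omega> \<tau> G"
    and "p < N" and "i < T"
  shows "f G (\<omega> p) (\<tau> p i) = f G p i"
  using assms unfolding equivariant_def strong_automorphism_def by blast

theorem theorem1:
  fixes N T :: nat and G :: game and f :: "game \<Rightarrow> nat \<Rightarrow> nat \<Rightarrow> real ^ 'd"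
  assumes "is_game N T G"
    and "equivariant N T f"
    and "p < N" and "i < T" and "q < N" and "j < T"
    and "strategically_equivalent N T G p i q j"
  shows "f G p i = f G q j"
proof -
  obtain \<omega> \<tau> where aut: "strong_automorphism N T \<omega> \<tau> G" and "\<omega> p = q" and "\<tau> p i = j"
    using assms(7) unfolding strategically_equivalent_def by blast
  with equivariant_automorphism_invariant[OF assms(2,1) aut assms(3,4)]
  show ?thesis by simp
qed

end
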